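(* Let $m,n,k\in\mathbb{N}$ and $\delta\le 0$. Then \[ \sum_{i=0}^{n}(-1)^{i}\binom{n}{i}\frac{(k)_i}{(m+n)_i}\,\frac{\prod_{j=k-1}^{k+i-2}(1-j\delta)}{\prod_{j=m}^{m+i-1}(1-j\delta)} =\frac{(m+n-k)_n\prod_{j=m+k}^{m+n+k-1}(1-j\delta)}{(m+n)_n\prod_{j=m}^{m+n-1}(1-j\delta)}. \]
   Context: For $x\in\mathbb{R}$ and $k\in\mathbb{N}$, $(x)_k=x(x-1)\cdots(x-k+1)$ with $(x)_0=1$. Empty products equal $1$. *)

theory Defs
  imports Complex_Main
begin

definition falling :: "real \<Rightarrow> nat \<Rightarrow> real" where
  "falling x k = (\<Prod>i<k. x - real i)"

end

theory Submission imports Defs begin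

text \<open>
Multiply the identity by its right-hand denominator. The cleared summand F(n,i) then satisfies
a first-order recurrence in n certified in the Wilf-Zeilberger manner: with
\<rho>(n) = (m+n+1-k)(1-(m+n+k)\<delta>) and G(n,i) = F(n,i)(k-i)(1-(k+i-1)\<delta>) one has
F(n+1,i) - \<rho>(n) F(n,i) = G(n,i) - G(n,i-1), so summing over i telescopes to
\<Sum>F(n+1,\<cdot>) = \<rho>(n) \<Sum>F(n,\<cdot>), and the product of the \<rho>'s is the right-hand numerator.
\<close>

definition delta_pochhammer :: "real \<Rightarrow> real \<Rightarrow> nat \<Rightarrow> real" where
  "delta_pochhammer d a l = (\<Prod>t<l. 1 - (a + real t) * d)"

lemma delta_pochhammer_0 [simp]: "delta_pochhammer d a 0 = 1"
  by (simp add: delta_pochhammer_def)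

lemma delta_pochhammer_Suc:
  "delta_pochhammer d a (Suc l) = delta_pochhammer d a l * (1 - (a + real l) * d)"
  by (simp add: delta_pochhammer_def)

lemma delta_pochhammer_rec:
  "delta_pochhammer d a (Suc l) = (1 - a * d) * delta_pochhammer d (a + 1) l"
  unfolding delta_pochhammer_def by (subst prod.lessThan_Suc_shift) (simp add: algebra_simps)

lemma delta_pochhammer_product:
  "delta_pochhammer d a (i + l) = delta_pochhammer d a i * delta_pochhammer d (a + real i) l"
  by (induction l) (simp_all add: delta_pochhammer_Suc algebra_simps)

lemma delta_pochhammer_pos: "0 \<le> a \<Longrightarrow> d \<le> 0 \<Longrightarrow> 0 < delta_pochhammer d a l"
  unfolding delta_pochhammer_def
  by (intro prod_pos) (smt (verit) mult_nonneg_nonpos of_nat_0_le_iff)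

lemma prod_atLeastAtMost_int_shift:
  "(\<Prod>j\<in>{a..a + int l - 1}. h j) = (\<Prod>t<l. h (a + int t))"
proof (induction l)
  case (Suc l)
  have "{a..a + int (Suc l) - 1} = insert (a + int l) {a..a + int l - 1}" by auto
  then show ?case by (simp add: Suc.IH mult.commute)
qed simp

lemma prod_atLeastAtMost_int_eq_delta_pochhammer:
  assumes "b = a + int l - 1"
  shows "(\<Prod>j\<in>{a..b}. 1 - of_int j * d) = delta_pochhammer d (of_int a) l"
  unfolding assms prod_atLeastAtMost_int_shift delta_pochhammer_def by simp

lemma falling_0 [simp]: "falling x 0 = 1"
  by (simp add: falling_def)

lemma falling_Suc: "falling x (Suc q) = falling x q * (x - real q)"
  by (simp add: falling_def)

lemma falling_rec: "falling x (Suc q) = x * falling (x - 1) q"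
  unfolding falling_def by (subst prod.lessThan_Suc_shift) (simp add: algebra_simps)

lemma falling_product: "falling x (i + l) = falling x i * falling (x - real i) l"
  by (induction l) (simp_all add: falling_Suc algebra_simps)

lemma falling_eq_pochhammer: "falling (x + real l) l = pochhammer (x + 1) l"
proof (induction l)
  case (Suc l)
  have "falling (x + real (Suc l)) (Suc l) = (x + real (Suc l)) * falling (x + real l) l"
    by (subst falling_rec) (simp add: algebra_simps)
  then show ?case using Suc by (simp add: pochhammer_Suc algebra_simps)
qed simp

lemma falling_pos: "real i \<le> x \<Longrightarrow> 0 < falling x i"
  unfolding falling_def by (intro prod_pos) auto

text \<open>The i-th summand times the common denominator (m+n)_n \<Prod>_{j=m}^{m+n-1}(1-j\<delta>).\<close>

definition cleared_summand :: "real \<Rightarrow> real \<Rightarrow> real \<Rightarrow> nat \<Rightarrow> nat \<Rightarrow> real" where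
  "cleared_summand d m k n i = (-1)^i * real (n choose i) * falling k i * delta_pochhammer d (k - 1) i
      * pochhammer (m + 1) (n - i) * delta_pochhammer d (m + real i) (n - i)"

definition certificate :: "real \<Rightarrow> real \<Rightarrow> real \<Rightarrow> nat \<Rightarrow> nat \<Rightarrow> real" where
  "certificate d m k n i = cleared_summand d m k n i * (k - real i) * (1 - (k + real i - 1) * d)"

lemma cleared_summand_eq_0: "n < i \<Longrightarrow> cleared_summand d m k n i = 0"
  by (simp add: cleared_summand_def)

lemma cleared_summand_recurrence_0:
  "cleared_summand d m k (Suc n) 0
     - (m + real n + 1 - k) * (1 - (m + real n + k) * d) * cleared_summand d m k n 0
   = certificate d m k n 0"
  by (simp add: certificate_def cleared_summand_def pochhammer_Suc delta_pochhammer_Suc)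
    (simp add: algebra_simps)

lemma cleared_summand_recurrence_Suc:
  assumes "l < n"
  shows "cleared_summand d m k (Suc n) (Suc l)
           - (m + real n + 1 - k) * (1 - (m + real n + k) * d) * cleared_summand d m k n (Suc l)
         = certificate d m k n (Suc l) - certificate d m k n l"
proof -
  obtain p where n: "n = Suc (l + p)" using assms less_imp_Suc_add by blast
  define c where "c = real (n choose l)"
  define c' where "c' = real (n choose Suc l)"
  define F where "F = falling k l * delta_pochhammer d (k - 1) l"
  define Q where "Q = pochhammer (m + 1) p * delta_pochhammer d (m + real (Suc l)) p"
  have absorb: "real (Suc l) * c' = real (Suc p) * c"
    unfolding c_def c'_def n by (metis Suc_times_binomial_add of_nat_mult)
  have sub: "Suc n - Suc l = Suc p" "n - Suc l = p" "n - l = Suc p" using n by auto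
  have shifted: "cleared_summand d m k (Suc n) (Suc l)
      = (-1)^Suc l * (c + c') * F * (k - real l) * (1 - (k - 1 + real l) * d)
          * Q * (m + 1 + real p) * (1 - (m + real l + 1 + real p) * d)"
    unfolding cleared_summand_def sub F_def Q_def c_def c'_def binomial_Suc_Suc of_nat_add
      falling_Suc delta_pochhammer_Suc pochhammer_Suc of_nat_Suc power_Suc by algebra
  have unshifted: "cleared_summand d m k n (Suc l)
      = (-1)^Suc l * c' * F * (k - real l) * (1 - (k - 1 + real l) * d) * Q"
    unfolding cleared_summand_def sub F_def Q_def c'_def falling_Suc delta_pochhammer_Suc power_Suc
    by algebra
  have previous: "cleared_summand d m k n l
      = (-1)^l * c * F * Q * (m + 1 + real p) * (1 - (m + real l) * d)"
    unfolding cleared_summand_def sub F_def Q_def c_def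
    by (simp add: delta_pochhammer_rec pochhammer_Suc ac_simps)
  have real_n: "real n = real l + real p + 1" using n by simp
  have "cleared_summand d m k (Suc n) (Suc l)
       - (m + real n + 1 - k) * (1 - (m + real n + k) * d) * cleared_summand d m k n (Suc l)
       - (certificate d m k n (Suc l) - certificate d m k n l)
     = (-1)^l * F * Q * (k - real l) * (1 - (k - 1 + real l) * d) * (m + 1 + real p) * d
         * (real (Suc p) * c - real (Suc l) * c')"
    unfolding certificate_def shifted unshifted previous real_n of_nat_Suc power_Suc by algebra
  then show ?thesis using absorb by simp
qed

lemma cleared_summand_recurrence:
  "i \<le> Suc n \<Longrightarrow>
    cleared_summand d m k (Suc n) i
      - (m + real n + 1 - k) * (1 - (m + real n + k) * d) * cleared_summand d m k n i
    = certificate d m k n i - (if i = 0 then 0 else certificate d m k n (i - 1))"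
proof (cases i)
  case (Suc l)
  assume "i \<le> Suc n"
  then show ?thesis
  proof (cases "l = n")
    case True
    then show ?thesis using Suc
      by (simp add: certificate_def cleared_summand_def binomial_eq_0 falling_Suc
        delta_pochhammer_Suc algebra_simps)
  qed (use Suc cleared_summand_recurrence_Suc in simp)
qed (simp add: cleared_summand_recurrence_0)

lemma sum_cleared_summand:
  "(\<Sum>i\<le>n. cleared_summand d m k n i) = falling (m + real n - k) n * delta_pochhammer d (m + k) n"
proof (induction n)
  case 0
  then show ?case by (simp add: cleared_summand_def)
next
  case (Suc n)
  define \<rho> where "\<rho> = (m + real n + 1 - k) * (1 - (m + real n + k) * d)"
  have "(\<Sum>i\<le>Suc n. cleared_summand d m k (Suc n) i) - \<rho> * (\<Sum>i\<le>Suc n. cleared_summand d m k n i)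
      = (\<Sum>i\<le>Suc n. cleared_summand d m k (Suc n) i - \<rho> * cleared_summand d m k n i)"
    by (simp only: sum_subtractf sum_distrib_left)
  also have "\<dots> = (\<Sum>i\<le>Suc n. certificate d m k n i - (if i = 0 then 0 else certificate d m k n (i - 1)))"
    by (intro sum.cong) (simp_all add: cleared_summand_recurrence \<rho>_def)
  also have "\<dots> = certificate d m k n (Suc n)"
    by (simp only: sum.atMost_Suc_shift) (simp add: lessThan_Suc_atMost[symmetric] sum_lessThan_telescope)
  also have "\<dots> = 0"
    by (simp add: certificate_def cleared_summand_eq_0)
  finally have "(\<Sum>i\<le>Suc n. cleared_summand d m k (Suc n) i) = \<rho> * (\<Sum>i\<le>n. cleared_summand d m k n i)"
    by (simp add: cleared_summand_eq_0)
  then show ?case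
    unfolding Suc.IH \<rho>_def falling_rec delta_pochhammer_Suc by (simp add: algebra_simps)
qed

lemma summand_eq_cleared_summand:
  fixes m n k i :: nat and \<delta> :: real
  assumes "\<delta> \<le> 0" and "i \<le> n"
  shows "(-1)^i * real (n choose i) * (falling (real k) i / falling (real (m + n)) i)
           * (delta_pochhammer \<delta> (real k - 1) i / delta_pochhammer \<delta> (real m) i)
         = cleared_summand \<delta> m k n i / (falling (real (m + n)) n * delta_pochhammer \<delta> m n)"
proof -
  have split: "n = i + (n - i)" "real (m + n) - real i = real m + real (n - i)"
    using assms(2) by simp_all
  have "falling (real (m + n)) n = falling (real (m + n)) i * pochhammer (real m + 1) (n - i)"
    by (subst split(1)) (simp only: falling_product split(2) falling_eq_pochhammer)
  moreover have "delta_pochhammer \<delta> m n = delta_pochhammer \<delta> m i * delta_pochhammer \<delta> (m + real i) (n - i)"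
    by (subst split(1)) (rule delta_pochhammer_product)
  moreover have "falling (real (m + n)) i \<noteq> 0"
    using assms(2) by (intro falling_pos less_imp_neq[symmetric]) simp
  moreover have "pochhammer (real m + 1) (n - i) \<noteq> 0"
    by (intro pochhammer_pos less_imp_neq[symmetric]) simp
  moreover have "delta_pochhammer \<delta> m i \<noteq> 0" "delta_pochhammer \<delta> (m + real i) (n - i) \<noteq> 0"
    using assms(1) by (intro delta_pochhammer_pos less_imp_neq[symmetric]; simp)+
  ultimately show ?thesis
    unfolding cleared_summand_def by (simp add: field_simps)
qed

theorem lemmaC1:
  fixes m n k :: nat and \<delta> :: real
  assumes "\<delta> \<le> 0"
  shows "(\<Sum>i=0..n. (-1)^i * real (n choose i)
            * (falling (real k) i / falling (real (m + n)) i)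
            * ((\<Prod>j\<in>{int k - 1 .. int k + int i - 2}. 1 - of_int j * \<delta>)
               / (\<Prod>j\<in>{int m .. int m + int i - 1}. 1 - of_int j * \<delta>)))
       = (falling (real (m + n) - real k) n
            * (\<Prod>j\<in>{int m + int k .. int m + int n + int k - 1}. 1 - of_int j * \<delta>))
         / (falling (real (m + n)) n
            * (\<Prod>j\<in>{int m .. int m + int n - 1}. 1 - of_int j * \<delta>))"
proof -
  have delta_pochhammer_intervals:
    "(\<Prod>j\<in>{int k - 1 .. int k + int i - 2}. 1 - of_int j * \<delta>)
       = delta_pochhammer \<delta> (real k - 1) i"
    "(\<Prod>j\<in>{int m .. int m + int i - 1}. 1 - of_int j * \<delta>) = delta_pochhammer \<delta> (real m) i"
    "(\<Prod>j\<in>{int m + int k .. int m + int n + int k - 1}. 1 - of_int j * \<delta>)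
       = delta_pochhammer \<delta> (real m + real k) n"
    for i by (subst prod_atLeastAtMost_int_eq_delta_pochhammer; simp)+
  show ?thesis
    unfolding delta_pochhammer_intervals
    using summand_eq_cleared_summand[OF assms] sum_cleared_summand[of \<delta> "real m" "real k" n]
    by (simp add: atLeast0AtMost sum_divide_distrib[symmetric])
qed

end
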